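(* Let $G$ be a simple graph with $n$ vertices, let $S(G)$ be its Seidel matrix, and let $\theta_1,\ldots,\theta_n$ be the eigenvalues of $S(G)$. Then the following are equivalent: (i) $|\det S(G)|\ge n-1$; (ii) for every $\alpha$ with $0<\alpha<2$, $$|\theta_1|^\alpha+\cdots+|\theta_n|^\alpha\ge (n-1)^\alpha+(n-1).$$
   Context: For a simple graph $G$ with vertex set $\{v_1,\ldots,v_n\}$, the Seidel matrix $S(G)=(s_{ij})$ is the $n\times n$ matrix with $s_{ii}=0$ for all $i$, and for $i\ne j$, $s_{ij}=-1$ if $v_i$ and $v_j$ are adjacent and $s_{ij}=1$ otherwise. It is a real symmetric matrix, so its eigenvalues are real. *)

theory Defs
  imports "Jordan_Normal_Form.Determinant" "Jordan_Normal_Form.Char_Poly"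
begin

definition simple_graph :: "nat \<Rightarrow> (nat \<Rightarrow> nat \<Rightarrow> bool) \<Rightarrow> bool" where
  "simple_graph n E \<longleftrightarrow> (\<forall>i<n. \<not> E i i) \<and> (\<forall>i<n. \<forall>j<n. E i j \<longleftrightarrow> E j i)"

definition seidel_matrix :: "nat \<Rightarrow> (nat \<Rightarrow> nat \<Rightarrow> bool) \<Rightarrow> real mat" where
  "seidel_matrix n E = mat n n (\<lambda>(i, j). if i = j then 0 else if E i j then -1 else 1)"

end

theory Submission
  imports Defs "Jordan_Normal_Form.Schur_Decomposition" "HOL-Analysis.Derivative"
begin

text \<open>The eigenvalues of S(G) satisfy \<open>\<Sum> \<theta>\<^sub>i\<^sup>2 = tr S\<^sup>2 = n (n - 1)\<close> and \<open>\<Prod> \<theta>\<^sub>i = det S\<close>.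
  With N = n - 1, \<open>y\<^sub>i = ln \<theta>\<^sub>i\<^sup>2\<close>, \<open>L = ln N\<^sup>2\<close> and \<open>\<beta> = \<alpha> / 2\<close> this reads
  \<open>\<Sum> exp y\<^sub>i = exp L + N\<close>, and (ii) becomes \<open>\<Sum> exp (\<beta> y\<^sub>i) \<ge> exp (\<beta> L) + N\<close>.

  If \<open>|det S| \<ge> N\<close> then \<open>\<Sum> y\<^sub>i \<ge> L\<close>. Writing \<open>exp u = 1 + u + exp_tail u\<close>, a single
  \<open>y\<^sub>i \<ge> L\<close> already carries enough of the tail; otherwise all \<open>y\<^sub>i < L\<close>, and since
  \<open>exp_tail (\<beta> y) / exp_tail y\<close> is nonincreasing, \<open>exp (\<beta> y) - 1\<close> dominates the combination of
  \<open>exp y - 1\<close> and y that is exact at y = L; summing gives (ii).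

  Conversely, if \<open>|det S| < N\<close>, the difference of the two sides of (ii) is negative at \<open>\<alpha> = 0\<close>
  when some \<open>\<theta>\<^sub>i = 0\<close>, and otherwise vanishes there with derivative
  \<open>\<Sum> ln |\<theta>\<^sub>i| - ln N < 0\<close>; either way it is negative for small \<open>\<alpha> > 0\<close>.\<close>

definition mat_trace :: "'a::comm_semiring_0 mat \<Rightarrow> 'a" where
  "mat_trace A = (\<Sum>i<dim_row A. A $$ (i, i))"

lemma mat_trace_mult:
  assumes "A \<in> carrier_mat n m" and "B \<in> carrier_mat m n"
  shows "mat_trace (A * B) = (\<Sum>i<n. \<Sum>k<m. A $$ (i, k) * B $$ (k, i))"
  using assms unfolding mat_trace_def
  by (auto simp: scalar_prod_def atLeast0LessThan intro!: sum.cong)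

lemma mat_trace_mult_comm:
  fixes A B :: "'a::comm_semiring_0 mat"
  assumes "A \<in> carrier_mat n m" and "B \<in> carrier_mat m n"
  shows "mat_trace (A * B) = mat_trace (B * A)"
  unfolding mat_trace_mult[OF assms] mat_trace_mult[OF assms(2,1)]
  by (subst sum.swap) (simp add: mult.commute)

lemma mat_trace_similar:
  assumes "similar_mat_wit A B P Q"
  shows "mat_trace A = mat_trace B"
proof -
  obtain n where P: "P \<in> carrier_mat n n" and B: "B \<in> carrier_mat n n"
    and Q: "Q \<in> carrier_mat n n" and QP: "Q * P = 1\<^sub>m n" and A: "A = P * B * Q"
    using assms unfolding similar_mat_wit_def Let_def by auto
  have "mat_trace (P * B * Q) = mat_trace (Q * (P * B))"
    using P B Q by (intro mat_trace_mult_comm) auto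
  also have "Q * (P * B) = (Q * P) * B"
    using P B Q by (simp add: assoc_mult_mat)
  finally show ?thesis
    using B by (simp add: A QP)
qed

lemma mat_trace_square_upper_triangular:
  fixes B :: "'a::comm_semiring_1 mat"
  assumes B: "B \<in> carrier_mat n n" and ut: "upper_triangular B"
  shows "mat_trace (B * B) = (\<Sum>a\<leftarrow>diag_mat B. a ^ 2)"
proof -
  have "B $$ (i, k) * B $$ (k, i) = 0" if "i < n" "k < n" "k \<noteq> i" for i k
    using ut B that by (cases "k < i") (auto simp: upper_triangular_def)
  then have "(\<Sum>k<n. B $$ (i, k) * B $$ (k, i)) = B $$ (i, i) ^ 2" if "i < n" for i
    using that by (subst sum.remove[of _ i]) (auto simp: power2_eq_square)
  then show ?thesis
    using B by (simp add: mat_trace_mult diag_mat_def sum_list_sum_nth atLeast0LessThan)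
qed

lemma schur_triangular_form:
  fixes A :: "'a::conjugatable_ordered_field mat"
  assumes A: "A \<in> carrier_mat n n" and cp: "char_poly A = (\<Prod>a\<leftarrow>es. [:- a, 1:])"
  obtains B P Q where "similar_mat_wit A B P Q" and "B \<in> carrier_mat n n"
    and "upper_triangular B" and "diag_mat B = es"
proof -
  obtain B P Q where "schur_decomposition A es = (B, P, Q)"
    by (cases "schur_decomposition A es")
  from schur_decomposition[OF A cp this]
  have "similar_mat_wit A B P Q" "upper_triangular B" "diag_mat B = es"
    by auto
  moreover from this(1) A have "B \<in> carrier_mat n n"
    unfolding similar_mat_wit_def Let_def by auto
  ultimately show ?thesis
    using that by blast
qed

lemma det_eq_prod_eigenvalues:
  fixes A :: "'a::conjugatable_ordered_field mat"
  assumes "A \<in> carrier_mat n n" and "char_poly A = (\<Prod>a\<leftarrow>es. [:- a, 1:])"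
  shows "det A = prod_list es"
proof -
  obtain B P Q where wit: "similar_mat_wit A B P Q" and B: "B \<in> carrier_mat n n"
    and ut: "upper_triangular B" and diag: "diag_mat B = es"
    using schur_triangular_form[OF assms] .
  have "det A = det B"
    using wit by (intro det_similar) (auto simp: similar_mat_def)
  then show ?thesis
    using det_upper_triangular[OF ut B] diag by simp
qed

lemma mat_trace_square_eq_sum_eigenvalue_squares:
  fixes A :: "'a::conjugatable_ordered_field mat"
  assumes "A \<in> carrier_mat n n" and "char_poly A = (\<Prod>a\<leftarrow>es. [:- a, 1:])"
  shows "mat_trace (A * A) = (\<Sum>a\<leftarrow>es. a ^ 2)"
proof -
  obtain B P Q where wit: "similar_mat_wit A B P Q" and B: "B \<in> carrier_mat n n"
    and ut: "upper_triangular B" and diag: "diag_mat B = es"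
    using schur_triangular_form[OF assms] .
  have "similar_mat_wit (A ^\<^sub>m 2) (B ^\<^sub>m 2) P Q"
    by (rule similar_mat_wit_pow[OF wit])
  then have "mat_trace (A * A) = mat_trace (B * B)"
    by (simp add: mat_trace_similar numeral_2_eq_2)
  then show ?thesis
    using mat_trace_square_upper_triangular[OF B ut] diag by simp
qed

lemma mat_trace_square_seidel_matrix:
  assumes "simple_graph n E"
  shows "mat_trace (seidel_matrix n E * seidel_matrix n E) = real n * (real n - 1)"
proof -
  let ?S = "seidel_matrix n E"
  have "?S $$ (i, k) * ?S $$ (k, i) = (if k = i then 0 else 1)" if "i < n" "k < n" for i k
    using assms that unfolding seidel_matrix_def simple_graph_def by auto
  then have "(\<Sum>k<n. ?S $$ (i, k) * ?S $$ (k, i)) = real n - 1" if "i < n" for i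
    using that by (simp add: sum.If_cases card_Diff_singleton of_nat_diff flip: Diff_eq)
  then show ?thesis
    by (simp add: mat_trace_mult[of _ n n] seidel_matrix_def)
qed

definition exp_tail :: "real \<Rightarrow> real" where
  "exp_tail u = exp u - 1 - u"

lemma exp_tail_nonneg: "0 \<le> exp_tail u"
  unfolding exp_tail_def using exp_ge_add_one_self[of u] by linarith

lemma exp_tail_pos: "u \<noteq> 0 \<Longrightarrow> 0 < exp_tail u"
  unfolding exp_tail_def using exp_minus_greater[of "- u"] by simp

lemma exp_tail_mono:
  assumes "0 \<le> u" and "u \<le> v"
  shows "exp_tail u \<le> exp_tail v"
proof -
  have "v - u \<le> exp (v - u) - 1"
    using exp_ge_add_one_self[of "v - u"] by linarith
  also have "\<dots> \<le> exp u * (exp (v - u) - 1)"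
    using mult_right_mono[of 1 "exp u" "exp (v - u) - 1"] exp_ge_add_one_self[of "v - u"] assms
    by simp
  also have "\<dots> = exp v - exp u"
    by (simp add: algebra_simps flip: exp_add)
  finally show ?thesis
    unfolding exp_tail_def by simp
qed

lemma neg_of_deriv2_neg:
  fixes E E' E'' :: "real \<Rightarrow> real"
  assumes "\<And>y. DERIV E y :> E' y" and "\<And>y. DERIV E' y :> E'' y"
    and "E 0 = 0" and "E' 0 = 0" and "\<And>y. 0 < y \<Longrightarrow> E'' y < 0" and "0 < L"
  shows "E L < 0"
proof -
  have E'_neg: "E' t < 0" if "0 < t" for t
  proof -
    obtain z where "0 < z" "E' t - E' 0 = t * E'' z"
      using MVT2[of 0 t E' E''] assms(2) \<open>0 < t\<close> by auto
    with assms(4) assms(5)[of z] \<open>0 < t\<close> show ?thesis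
      by (simp add: mult_pos_neg)
  qed
  obtain z where "0 < z" "E L - E 0 = L * E' z"
    using MVT2[of 0 L E E'] assms(1,6) by auto
  with assms(3,6) E'_neg[of z] show ?thesis
    by (simp add: mult_pos_neg)
qed

lemma exp_tail_scale_lt:
  assumes "0 < \<beta>" and "\<beta> < 1" and "0 < L"
  shows "exp_tail (\<beta> * L) < \<beta>\<^sup>2 * exp_tail L"
proof -
  have "exp_tail (\<beta> * L) - \<beta>\<^sup>2 * exp_tail L < 0"
  proof (rule neg_of_deriv2_neg[where E = "\<lambda>y. exp_tail (\<beta> * y) - \<beta>\<^sup>2 * exp_tail y" and L = L
        and E' = "\<lambda>y. \<beta> * (exp (\<beta> * y) - 1) - \<beta>\<^sup>2 * (exp y - 1)"
        and E'' = "\<lambda>y. \<beta>\<^sup>2 * (exp (\<beta> * y) - exp y)"])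
    show "DERIV (\<lambda>y. exp_tail (\<beta> * y) - \<beta>\<^sup>2 * exp_tail y) y
        :> \<beta> * (exp (\<beta> * y) - 1) - \<beta>\<^sup>2 * (exp y - 1)" for y
      unfolding exp_tail_def
      by (auto intro!: derivative_eq_intros simp: power2_eq_square algebra_simps)
    show "DERIV (\<lambda>y. \<beta> * (exp (\<beta> * y) - 1) - \<beta>\<^sup>2 * (exp y - 1)) y
        :> \<beta>\<^sup>2 * (exp (\<beta> * y) - exp y)" for y
      by (auto intro!: derivative_eq_intros simp: power2_eq_square algebra_simps)
    show "\<beta>\<^sup>2 * (exp (\<beta> * y) - exp y) < 0" if "0 < y" for y
      using assms that by (simp add: mult_pos_neg)
  qed (use assms in \<open>auto simp: exp_tail_def\<close>)
  then show ?thesis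
    by simp
qed

lemma nonneg_of_convex_concave:
  fixes D D' D'' :: "real \<Rightarrow> real"
  assumes dD: "\<And>y. DERIV D y :> D' y" and dD': "\<And>y. DERIV D' y :> D'' y"
    and "D 0 = 0" and "D' 0 = 0" and "D L = 0" and "0 < z"
    and "\<And>y. y \<le> z \<Longrightarrow> 0 \<le> D'' y" and "\<And>y. z \<le> y \<Longrightarrow> D'' y \<le> 0"
    and "y \<le> L"
  shows "0 \<le> D y"
proof -
  have convex_part: "0 \<le> D x" if "x \<le> z" for x
  proof -
    have "convex_on {..z} D"
      by (rule f''_ge0_imp_convex[of _ _ D' D'']) (use dD dD' assms(7) in auto)
    then have "D' 0 * (x - 0) \<le> D x - D 0"
      by (rule convex_on_imp_above_tangent)
        (use \<open>0 < z\<close> that dD in \<open>auto intro: has_field_derivative_at_within\<close>)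
    with assms(3,4) show ?thesis
      by simp
  qed
  show ?thesis
  proof (cases "y \<le> z")
    case False
    have "concave_on {z..L} D"
      by (rule f''_le0_imp_concave[of _ _ D' D'']) (use dD dD' assms(8) in auto)
    then have "(D z - D L) / (L - z) * (L - y) + D L \<le> D y"
      using False assms(9) by (intro concave_onD_Icc'') auto
    moreover have "0 \<le> (D z - D L) / (L - z) * (L - y)"
      using convex_part[of z] assms(5,9) False by (intro mult_nonneg_nonneg divide_nonneg_nonneg) auto
    ultimately show ?thesis
      using assms(5) by simp
  qed (use convex_part in auto)
qed

text \<open>The difference
  below changes from convex to concave at z, and \<open>exp_tail_scale_lt\<close> is what makes z positive.\<close>

lemma exp_tail_scale_ratio:
  assumes b: "0 < \<beta>" "\<beta> < 1" and L: "0 < L" and "y \<le> L"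
  shows "exp_tail (\<beta> * L) * exp_tail y \<le> exp_tail (\<beta> * y) * exp_tail L"
proof -
  define K where "K = exp_tail L"
  define M where "M = exp_tail (\<beta> * L)"
  have M: "0 < M"
    unfolding M_def using L b by (intro exp_tail_pos) simp
  have MK: "M < \<beta>\<^sup>2 * K"
    unfolding M_def K_def by (rule exp_tail_scale_lt[OF b L])
  define z where "z = ln (\<beta>\<^sup>2 * K / M) / (1 - \<beta>)"
  have z: "0 < z"
    unfolding z_def using MK M b by (intro divide_pos_pos) auto
  have exp_z: "exp ((1 - \<beta>) * z) = \<beta>\<^sup>2 * K / M"
    unfolding z_def using MK M b by simp
  have second_deriv: "\<beta>\<^sup>2 * K * exp (\<beta> * y) - M * exp y
      = M * exp (\<beta> * y) * (exp ((1 - \<beta>) * z) - exp ((1 - \<beta>) * y))" for y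
  proof -
    have "exp y = exp (\<beta> * y) * exp ((1 - \<beta>) * y)"
      by (simp add: algebra_simps flip: exp_add)
    moreover have "\<beta>\<^sup>2 * K = M * exp ((1 - \<beta>) * z)"
      using M by (simp add: exp_z)
    ultimately show ?thesis
      by (simp add: algebra_simps)
  qed
  have "0 \<le> exp_tail (\<beta> * y) * K - M * exp_tail y"
  proof (rule nonneg_of_convex_concave[where D = "\<lambda>y. exp_tail (\<beta> * y) * K - M * exp_tail y" and y = y
        and D' = "\<lambda>y. \<beta> * (exp (\<beta> * y) - 1) * K - M * (exp y - 1)"
        and D'' = "\<lambda>y. \<beta>\<^sup>2 * K * exp (\<beta> * y) - M * exp y" and z = z and L = L])
    show "DERIV (\<lambda>y. exp_tail (\<beta> * y) * K - M * exp_tail y) y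
        :> \<beta> * (exp (\<beta> * y) - 1) * K - M * (exp y - 1)" for y
      unfolding exp_tail_def by (auto intro!: derivative_eq_intros simp: algebra_simps)
    show "DERIV (\<lambda>y. \<beta> * (exp (\<beta> * y) - 1) * K - M * (exp y - 1)) y
        :> \<beta>\<^sup>2 * K * exp (\<beta> * y) - M * exp y" for y
      by (auto intro!: derivative_eq_intros simp: power2_eq_square algebra_simps)
    show "0 \<le> \<beta>\<^sup>2 * K * exp (\<beta> * y) - M * exp y" if "y \<le> z" for y
      unfolding second_deriv using M b that by (intro mult_nonneg_nonneg) auto
    show "\<beta>\<^sup>2 * K * exp (\<beta> * y) - M * exp y \<le> 0" if "z \<le> y" for y
      unfolding second_deriv using M b that by (intro mult_nonneg_nonpos) auto
  qed (use z assms in \<open>auto simp: K_def M_def exp_tail_def\<close>)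
  then show ?thesis
    unfolding K_def M_def by (simp add: mult.commute)
qed

lemma sum_exp_scale_ge_of_member_ge:
  fixes y :: "'i \<Rightarrow> real"
  assumes "finite I" and "i \<in> I" and "L \<le> y i" and "0 \<le> L"
    and "L \<le> (\<Sum>j\<in>I. y j)" and "0 \<le> \<beta>"
  shows "exp (\<beta> * L) + real (card I) - 1 \<le> (\<Sum>j\<in>I. exp (\<beta> * y j))"
proof -
  have "exp (\<beta> * L) + real (card I) - 1 = real (card I) + \<beta> * L + exp_tail (\<beta> * L)"
    by (simp add: exp_tail_def)
  also have "\<dots> \<le> real (card I) + \<beta> * (\<Sum>j\<in>I. y j) + (\<Sum>j\<in>I. exp_tail (\<beta> * y j))"
  proof -
    have "exp_tail (\<beta> * L) \<le> exp_tail (\<beta> * y i)"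
      using assms by (intro exp_tail_mono mult_left_mono) auto
    also have "\<dots> \<le> (\<Sum>j\<in>I. exp_tail (\<beta> * y j))"
      using assms by (intro member_le_sum exp_tail_nonneg)
    finally show ?thesis
      using assms(5,6) mult_left_mono by fastforce
  qed
  also have "\<dots> = (\<Sum>j\<in>I. exp (\<beta> * y j))"
    by (simp add: exp_tail_def sum.distrib sum_subtractf sum_distrib_left)
  finally show ?thesis .
qed

lemma sum_exp_scale_ge_of_all_le:
  fixes y :: "'i \<Rightarrow> real"
  assumes "finite I" and b: "0 < \<beta>" "\<beta> < 1" and L: "0 < L" and "\<And>j. j \<in> I \<Longrightarrow> y j \<le> L"
    and sum_y: "L \<le> (\<Sum>j\<in>I. y j)"
    and sum_exp_y: "exp L + real (card I) - 1 \<le> (\<Sum>j\<in>I. exp (y j))"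
  shows "exp (\<beta> * L) + real (card I) - 1 \<le> (\<Sum>j\<in>I. exp (\<beta> * y j))"
proof -
  define B where "B = exp_tail (\<beta> * L) / exp_tail L"
  define C where "C = \<beta> - B"
  have tail_L: "0 < exp_tail L"
    using L by (intro exp_tail_pos) simp
  have B: "0 \<le> B"
    unfolding B_def using exp_tail_nonneg tail_L by simp
  have C: "0 \<le> C"
  proof -
    have "exp_tail (\<beta> * L) < \<beta>\<^sup>2 * exp_tail L"
      by (rule exp_tail_scale_lt[OF b L])
    also have "\<dots> \<le> \<beta> * exp_tail L"
      using b tail_L by (intro mult_right_mono) (auto simp: power2_eq_square)
    finally show ?thesis
      unfolding C_def B_def using tail_L by (simp add: field_simps)
  qed
  txt \<open>B and C are chosen so that the bound below is an equality at y = L.\<close>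
  have chord: "B * (exp (y j) - 1) + C * y j \<le> exp (\<beta> * y j) - 1" if "j \<in> I" for j
  proof -
    have "B * exp_tail (y j) \<le> exp_tail (\<beta> * y j)"
      using exp_tail_scale_ratio[OF b L assms(5)[OF that]] tail_L
      by (simp add: B_def field_simps)
    then show ?thesis
      by (simp add: exp_tail_def C_def algebra_simps)
  qed
  have "exp (\<beta> * L) - 1 = B * exp_tail L + \<beta> * L"
    using tail_L by (simp add: B_def) (simp add: exp_tail_def)
  also have "\<dots> = B * (exp L - 1) + C * L"
    by (simp add: exp_tail_def C_def algebra_simps)
  also have "\<dots> \<le> B * ((\<Sum>j\<in>I. exp (y j)) - real (card I)) + C * (\<Sum>j\<in>I. y j)"
    using B C sum_y sum_exp_y by (intro add_mono mult_left_mono) auto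
  also have "\<dots> = (\<Sum>j\<in>I. B * (exp (y j) - 1) + C * y j)"
    by (simp add: sum.distrib sum_subtractf sum_distrib_left right_diff_distrib)
  also have "\<dots> \<le> (\<Sum>j\<in>I. exp (\<beta> * y j) - 1)"
    using chord by (rule sum_mono)
  finally show ?thesis
    by (simp add: sum_subtractf)
qed

lemma sum_exp_scale_ge:
  fixes y :: "'i \<Rightarrow> real"
  assumes "finite I" and "I \<noteq> {}" and "0 < \<beta>" and "\<beta> < 1" and "0 \<le> L"
    and "L \<le> (\<Sum>j\<in>I. y j)" and "exp L + real (card I) - 1 \<le> (\<Sum>j\<in>I. exp (y j))"
  shows "exp (\<beta> * L) + real (card I) - 1 \<le> (\<Sum>j\<in>I. exp (\<beta> * y j))"
proof (cases "\<exists>i\<in>I. L \<le> y i")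
  case True
  then show ?thesis
    using sum_exp_scale_ge_of_member_ge assms by (metis less_eq_real_def)
next
  case False
  have "0 < L"
  proof (rule ccontr)
    assume "\<not> 0 < L"
    then have "0 < (\<Sum>j\<in>I. - y j)"
      using False assms by (intro sum_pos) auto
    with assms(5,6) show False
      by (simp add: sum_negf)
  qed
  moreover have "y j \<le> L" if "j \<in> I" for j
    using False that by auto
  ultimately show ?thesis
    by (rule sum_exp_scale_ge_of_all_le[OF assms(1,3,4) _ _ assms(6,7)])
qed

lemma powr_sum_ge_of_abs_prod_ge:
  fixes t :: "'i \<Rightarrow> real"
  assumes "finite I" and "2 \<le> card I"
    and sum_sq: "(\<Sum>i\<in>I. (t i)\<^sup>2) = real (card I) * (real (card I) - 1)"
    and prod: "real (card I) - 1 \<le> \<bar>\<Prod>i\<in>I. t i\<bar>"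
    and "0 < \<alpha>" and "\<alpha> < 2"
  shows "(real (card I) - 1) powr \<alpha> + (real (card I) - 1) \<le> (\<Sum>i\<in>I. \<bar>t i\<bar> powr \<alpha>)"
proof -
  define N where "N = real (card I) - 1"
  have N: "1 \<le> N"
    unfolding N_def using assms(2) by simp
  have nz: "t i \<noteq> 0" if "i \<in> I" for i
    using prod_zero[OF assms(1), of t] that prod N by (force simp: N_def)
  define y where "y i = ln ((t i)\<^sup>2)" for i
  define L where "L = ln (N\<^sup>2)"
  have powr_eq: "\<bar>u\<bar> powr \<alpha> = exp (\<alpha> / 2 * ln (u\<^sup>2))" if "u \<noteq> 0" for u
  proof -
    have "ln (u\<^sup>2) = 2 * ln \<bar>u\<bar>"
      using ln_realpow[of "\<bar>u\<bar>" 2] by simp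
    with that show ?thesis
      by (simp add: powr_def)
  qed
  have "exp (\<alpha> / 2 * L) + real (card I) - 1 \<le> (\<Sum>i\<in>I. exp (\<alpha> / 2 * y i))"
  proof (rule sum_exp_scale_ge)
    show "0 \<le> L"
      unfolding L_def using N by simp
    have "L \<le> ln (\<bar>\<Prod>i\<in>I. t i\<bar>\<^sup>2)"
      unfolding L_def using prod N by (intro ln_mono power_mono) (auto simp: N_def)
    also have "\<dots> = (\<Sum>i\<in>I. y i)"
      using nz assms(1) by (simp add: y_def ln_prod prod_power_distrib)
    finally show "L \<le> (\<Sum>i\<in>I. y i)" .
    have "(\<Sum>i\<in>I. exp (y i)) = (\<Sum>i\<in>I. (t i)\<^sup>2)"
      using nz by (intro sum.cong) (auto simp: y_def)
    moreover have "exp L = N\<^sup>2"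
      using N by (simp add: L_def)
    ultimately show "exp L + real (card I) - 1 \<le> (\<Sum>i\<in>I. exp (y i))"
      using sum_sq by (simp add: N_def power2_eq_square algebra_simps)
  qed (use assms in auto)
  moreover have "exp (\<alpha> / 2 * L) = N powr \<alpha>"
    using N powr_eq[of N] by (simp add: L_def)
  moreover have "(\<Sum>i\<in>I. exp (\<alpha> / 2 * y i)) = (\<Sum>i\<in>I. \<bar>t i\<bar> powr \<alpha>)"
    using nz powr_eq by (intro sum.cong) (auto simp: y_def)
  ultimately show ?thesis
    by (simp add: N_def)
qed

lemma has_real_derivative_const_powr:
  assumes "0 \<le> a"
  shows "((\<lambda>x. a powr x) has_real_derivative ln a * a powr x) (at x)"
proof (cases "a = 0")
  case False
  with assms show ?thesis
    by (auto intro!: derivative_eq_intros simp: powr_def)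
qed simp

lemma eventually_at_right_neg_of_deriv:
  fixes f :: "real \<Rightarrow> real"
  assumes "DERIV f x :> d" and "f x < 0 \<or> f x = 0 \<and> d < 0"
  shows "\<forall>\<^sub>F h in at_right x. f h < 0"
  using assms(2)
proof
  assume "f x < 0"
  have "(f \<longlongrightarrow> f x) (at x)"
    using DERIV_isCont[OF assms(1)] by (simp add: isCont_def)
  then have "\<forall>\<^sub>F h in at x. f h < 0"
    using \<open>f x < 0\<close> by (rule order_tendstoD)
  then show ?thesis
    by (simp add: eventually_at_split)
next
  assume "f x = 0 \<and> d < 0"
  with DERIV_neg_dec_right[OF assms(1)] obtain \<delta> where "0 < \<delta>" "\<forall>h>0. h < \<delta> \<longrightarrow> f (x + h) < 0"
    by auto
  then show ?thesis
    unfolding eventually_at_right_field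
    by (intro exI[of _ "x + \<delta>"]) (auto dest: spec[of _ "_ - x"])
qed

lemma powr_sum_lt_of_abs_prod_lt:
  fixes t :: "'i \<Rightarrow> real"
  assumes "finite I" and prod: "\<bar>\<Prod>i\<in>I. t i\<bar> < real (card I) - 1"
  shows "\<exists>\<alpha>. 0 < \<alpha> \<and> \<alpha> < 2 \<and>
    (\<Sum>i\<in>I. \<bar>t i\<bar> powr \<alpha>) < (real (card I) - 1) powr \<alpha> + (real (card I) - 1)"
proof -
  define N where "N = real (card I) - 1"
  have N: "0 < N"
    unfolding N_def using prod abs_ge_zero order.strict_trans1 by blast
  define f where "f x = (\<Sum>i\<in>I. \<bar>t i\<bar> powr x) - N powr x - N" for x
  define f' where "f' x = (\<Sum>i\<in>I. ln \<bar>t i\<bar> * \<bar>t i\<bar> powr x) - ln N * N powr x" for x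
  have "DERIV f x :> f' x" for x
    unfolding f_def f'_def using N
    by (auto intro!: derivative_eq_intros has_real_derivative_const_powr)
  moreover have "f 0 < 0 \<or> f 0 = 0 \<and> f' 0 < 0"
  proof (cases "\<exists>i\<in>I. t i = 0")
    case True
    then have "(\<Sum>i\<in>I. \<bar>t i\<bar> powr 0) < (\<Sum>i\<in>I. 1)"
      using assms(1) by (intro sum_strict_mono_ex1) auto
    then show ?thesis
      using N by (simp add: f_def N_def)
  next
    case False
    have "(\<Sum>i\<in>I. ln \<bar>t i\<bar>) = ln \<bar>\<Prod>i\<in>I. t i\<bar>"
      using False assms(1) prod_norm[of t I, symmetric] by (simp add: ln_prod)
    also have "\<dots> < ln N"
      using False assms(1) prod by (simp add: N_def)
    finally show ?thesis
      using False N by (simp add: f_def f'_def N_def)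
  qed
  ultimately have "\<forall>\<^sub>F \<alpha> in at_right 0. f \<alpha> < 0 \<and> \<alpha> \<in> {0<..<2}"
    by (intro eventually_conj eventually_at_right_neg_of_deriv eventually_at_right_real) auto
  then obtain \<alpha> where "f \<alpha> < 0" "0 < \<alpha>" "\<alpha> < 2"
    using eventually_happens'[OF trivial_limit_at_right_real] by fastforce
  then show ?thesis
    by (intro exI[of _ \<alpha>]) (simp add: f_def N_def)
qed

theorem theorem1p1:
  fixes n :: nat and E :: "nat \<Rightarrow> nat \<Rightarrow> bool" and \<theta> :: "real list"
  assumes "simple_graph n E"
    and "length \<theta> = n"
    and "char_poly (seidel_matrix n E) = (\<Prod>a\<leftarrow>\<theta>. [:- a, 1:])"
  shows "\<bar>det (seidel_matrix n E)\<bar> \<ge> real (n - 1) \<longleftrightarrow>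
         (\<forall>\<alpha>::real. 0 < \<alpha> \<and> \<alpha> < 2 \<longrightarrow>
            (\<Sum>a\<leftarrow>\<theta>. \<bar>a\<bar> powr \<alpha>) \<ge> real (n - 1) powr \<alpha> + real (n - 1))"
proof -
  have S: "seidel_matrix n E \<in> carrier_mat n n"
    by (simp add: seidel_matrix_def)
  have det: "det (seidel_matrix n E) = (\<Prod>i<n. \<theta> ! i)"
    using det_eq_prod_eigenvalues[OF S assms(3)] assms(2) by (simp add: prod.list_conv_set_nth atLeast0LessThan)
  have sum_sq: "(\<Sum>i<n. (\<theta> ! i)\<^sup>2) = real n * (real n - 1)"
    using mat_trace_square_eq_sum_eigenvalue_squares[OF S assms(3)]
      mat_trace_square_seidel_matrix[OF assms(1)] assms(2)
    by (simp add: sum_list_sum_nth atLeast0LessThan)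
  have powr_sum: "(\<Sum>a\<leftarrow>\<theta>. \<bar>a\<bar> powr \<alpha>) = (\<Sum>i<n. \<bar>\<theta> ! i\<bar> powr \<alpha>)" for \<alpha>
    using assms(2) by (simp add: sum_list_sum_nth atLeast0LessThan)
  show ?thesis
  proof (cases "2 \<le> n")
    case True
    have ge: "(real n - 1) powr \<alpha> + (real n - 1) \<le> (\<Sum>i<n. \<bar>\<theta> ! i\<bar> powr \<alpha>)"
      if "real n - 1 \<le> \<bar>\<Prod>i<n. \<theta> ! i\<bar>" "0 < \<alpha>" "\<alpha> < 2" for \<alpha>
      using powr_sum_ge_of_abs_prod_ge[of "{..<n}" "(!) \<theta>" \<alpha>] True sum_sq that by simp
    have lt: "\<exists>\<alpha>. 0 < \<alpha> \<and> \<alpha> < 2 \<and> (\<Sum>i<n. \<bar>\<theta> ! i\<bar> powr \<alpha>) < (real n - 1) powr \<alpha> + (real n - 1)"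
      if "\<bar>\<Prod>i<n. \<theta> ! i\<bar> < real n - 1"
      using powr_sum_lt_of_abs_prod_lt[of "{..<n}" "(!) \<theta>"] that by simp
    show ?thesis
      unfolding det powr_sum using True ge lt by (simp add: of_nat_diff) (meson not_le)
  next
    case False
    then have "(\<Sum>i<n. (\<theta> ! i)\<^sup>2) = 0"
      using sum_sq by (cases "n = 0") auto
    then have "\<theta> ! i = 0" if "i < n" for i
      using that by (simp add: sum_nonneg_eq_0_iff)
    with False show ?thesis
      unfolding powr_sum by simp
  qed
qed

end
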